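(* Let $P\subseteq\mathbb{R}^d$ be a $d$-dimensional lattice polytope and let $\operatorname{Pyr}(P)=\operatorname{conv}(P\times\{1\},\{0\})\subseteq\mathbb{R}^d\times\mathbb{R}$ be the lattice pyramid over $P$. Then $$\mu^F(\operatorname{Pyr}(P))=\max\{2,\ \mu^F(P)+1\}.$$
   Context: For a $d$-dimensional rational polytope $P\subseteq\mathbb{R}^d$ and $a\in(\mathbb{Z}^d)^*$ let $h_P(a)=\min_{x\in P}\langle a,x\rangle$. For $s>0$ the Fine adjoint polytope is $P^{F(s)}=\{x\in\mathbb{R}^d : \langle a,x\rangle\ge h_P(a)+s \text{ for all } a\in(\mathbb{Z}^d)^*\setminus\{0\}\}$. The Fine $\mathbb{Q}$-codegree is $\mu^F(P)=(\sup\{s>0 : P^{F(s)}\neq\emptyset\})^{-1}$. A lattice polytope has vertices in $\mathbb{Z}^d$. *)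

theory Defs
  imports "HOL-Analysis.Analysis"
begin

text \<open>Ambient space: a Euclidean space with its standard basis; the lattice is the set of
  points with integer coordinates w.r.t. Basis (this models R^d with Z^d).
  Dual lattice vectors a are identified with integer vectors via the inner product.\<close>

definition lattice_pt :: "'a::euclidean_space \<Rightarrow> bool" where
  "lattice_pt x \<longleftrightarrow> (\<forall>b\<in>Basis. x \<bullet> b \<in> \<int>)"

definition lattice_polytope :: "'a::euclidean_space set \<Rightarrow> bool" where
  "lattice_polytope P \<longleftrightarrow>
     (\<exists>V. finite V \<and> V \<noteq> {} \<and> (\<forall>v\<in>V. lattice_pt v) \<and> P = convex hull V)"

definition support_min :: "'a::euclidean_space set \<Rightarrow> 'a \<Rightarrow> real" where
  "support_min P a = Inf ((\<lambda>x. a \<bullet> x) ` P)"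

definition fine_adjoint :: "'a::euclidean_space set \<Rightarrow> real \<Rightarrow> 'a set" where
  "fine_adjoint P s =
     {x. \<forall>a. lattice_pt a \<and> a \<noteq> 0 \<longrightarrow> a \<bullet> x \<ge> support_min P a + s}"

definition fine_codegree :: "'a::euclidean_space set \<Rightarrow> real" where
  "fine_codegree P = inverse (Sup {s. s > 0 \<and> fine_adjoint P s \<noteq> {}})"

definition pyr :: "'a::euclidean_space set \<Rightarrow> ('a \<times> real) set" where
  "pyr P = convex hull ((\<lambda>x. (x, 1)) ` P \<union> {0})"

end

theory Submission
  imports Defs
begin

text \<open>Write \<open>h\<^sub>P\<close> for the support function and \<open>F(Q, s)\<close> for the Fine adjoint of \<open>Q\<close> at
  level \<open>s\<close>. The support function of \<open>Pyr(P)\<close> at \<open>(a, t)\<close> is \<open>min 0 (h\<^sub>P(a) + t)\<close>.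
  Testing a point \<open>(y, l) \<in> F(Pyr(P), s)\<close> against the dual vectors \<open>(0, \<plusminus>1)\<close> and
  \<open>(a, -h\<^sub>P(a))\<close> gives \<open>s \<le> l \<le> 1 - s\<close> and \<open>y / l \<in> F(P, s / l)\<close>. Conversely, if \<open>c \<le> 1\<close>
  and \<open>x \<in> F(P, c)\<close>, then \<open>(x, 1) / (1 + c) \<in> F(Pyr(P), c / (1 + c))\<close>; here the dual vectors
  \<open>(0, t)\<close> are handled by the integrality of \<open>t\<close>. So the levels with nonempty adjoint for
  \<open>Pyr(P)\<close> are the image of those for \<open>P\<close> under the increasing continuous map
  \<open>s \<mapsto> c / (1 + c)\<close>, \<open>c = min s 1\<close>, and the suprema correspond in the same way:
  \<open>1 / \<mu>\<^sup>F(Pyr(P)) = c / (1 + c)\<close> with \<open>c = min (1 / \<mu>\<^sup>F(P)) 1\<close>.\<close>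

lemma lattice_pt_inner_Ints:
  assumes "lattice_pt a" "lattice_pt v"
  shows "a \<bullet> v \<in> \<int>"
proof -
  have "a \<bullet> v = (\<Sum>b\<in>Basis. (a \<bullet> b) * (v \<bullet> b))" by (rule euclidean_inner)
  also have "\<dots> \<in> \<int>" using assms unfolding lattice_pt_def by (intro Ints_sum Ints_mult) auto
  finally show ?thesis .
qed

lemma lattice_pt_Pair_iff: "lattice_pt (a, t::real) \<longleftrightarrow> lattice_pt a \<and> t \<in> \<int>"
  unfolding lattice_pt_def by (auto simp: Basis_prod_def)

lemma lattice_pt_zero: "lattice_pt 0"
  by (simp add: lattice_pt_def)

lemma lattice_pt_uminus: "lattice_pt x \<Longrightarrow> lattice_pt (- x)"
  unfolding lattice_pt_def by simp

lemma lattice_pt_Basis: "b \<in> Basis \<Longrightarrow> lattice_pt b"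
  unfolding lattice_pt_def by (auto simp: inner_Basis)

lemma norm_ge_1_if_lattice_pt:
  assumes "lattice_pt a" "a \<noteq> 0"
  shows "1 \<le> norm a"
proof -
  obtain b where b: "b \<in> Basis" "a \<bullet> b \<noteq> 0" using assms(2) euclidean_all_zero_iff by blast
  obtain k where k: "a \<bullet> b = of_int k" using assms(1) b(1) by (auto simp: lattice_pt_def elim: Ints_cases)
  with b(2) have "1 \<le> \<bar>a \<bullet> b\<bar>" by simp
  then show ?thesis using Basis_le_norm[OF b(1), of a] by linarith
qed

lemma support_min_eqI:
  assumes "v \<in> P" "\<And>p. p \<in> P \<Longrightarrow> a \<bullet> v \<le> a \<bullet> p"
  shows "support_min P a = a \<bullet> v"
  unfolding support_min_def using assms by (intro cInf_eq_minimum) auto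

lemma convex_hull_inner_ge_vertex:
  fixes V :: "'a::euclidean_space set"
  assumes "finite V" "V \<noteq> {}"
  obtains v where "v \<in> V" "\<And>p. p \<in> convex hull V \<Longrightarrow> a \<bullet> v \<le> a \<bullet> p"
proof -
  obtain v where v: "v \<in> V" "\<And>w. w \<in> V \<Longrightarrow> a \<bullet> v \<le> a \<bullet> w"
    using ex_is_arg_min_if_finite[OF assms, of "(\<bullet>) a"] by (auto simp: is_arg_min_linorder)
  have "convex hull V \<subseteq> {p. a \<bullet> v \<le> a \<bullet> p}"
    using v(2) by (intro hull_minimal) (auto simp: convex_halfspace_ge)
  with v(1) show thesis by (intro that) auto
qed

lemma lattice_polytope_support_min:
  assumes "lattice_polytope P"
  obtains v where "v \<in> P" "lattice_pt v" "support_min P a = a \<bullet> v"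
    "\<And>p. p \<in> P \<Longrightarrow> a \<bullet> v \<le> a \<bullet> p"
proof -
  obtain V where V: "finite V" "V \<noteq> {}" "\<forall>v\<in>V. lattice_pt v" "P = convex hull V"
    using assms unfolding lattice_polytope_def by blast
  obtain v where v: "v \<in> V" "\<And>p. p \<in> convex hull V \<Longrightarrow> a \<bullet> v \<le> a \<bullet> p"
    using convex_hull_inner_ge_vertex[OF V(1,2), of a] by blast
  have "v \<in> P" unfolding V(4) using v(1) by (rule hull_inc)
  have ge: "\<And>p. p \<in> P \<Longrightarrow> a \<bullet> v \<le> a \<bullet> p" using v(2) V(4) by simp
  show thesis
    using that[OF \<open>v \<in> P\<close> _ support_min_eqI[OF \<open>v \<in> P\<close> ge] ge] V(3) v(1) by blast
qed

lemma support_min_le: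
  assumes "lattice_polytope P" "p \<in> P"
  shows "support_min P a \<le> a \<bullet> p"
proof -
  obtain v where "support_min P a = a \<bullet> v" "a \<bullet> v \<le> a \<bullet> p"
    using lattice_polytope_support_min[OF assms(1)] assms(2) by blast
  then show ?thesis by simp
qed

lemma support_min_Ints:
  assumes "lattice_polytope P" "lattice_pt a"
  shows "support_min P a \<in> \<int>"
proof -
  obtain v where "lattice_pt v" "support_min P a = a \<bullet> v"
    using lattice_polytope_support_min[OF assms(1)] by blast
  then show ?thesis using lattice_pt_inner_Ints[OF assms(2)] by simp
qed

lemma support_min_zero:
  assumes "lattice_polytope P"
  shows "support_min P 0 = 0"
proof -
  obtain v where "support_min P 0 = 0 \<bullet> v" "v \<in> P"
    using lattice_polytope_support_min[OF assms, of 0] by blast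
  then show ?thesis by simp
qed

lemma support_min_pyr:
  assumes "lattice_polytope P"
  shows "support_min (pyr P) (a, t) = min 0 (support_min P a + t)"
proof -
  obtain v where v: "v \<in> P" "support_min P a = a \<bullet> v" "\<And>p. p \<in> P \<Longrightarrow> a \<bullet> v \<le> a \<bullet> p"
    using lattice_polytope_support_min[OF assms] by blast
  define m where "m = min 0 (a \<bullet> v + t)"
  have "m \<le> (a, t) \<bullet> (x, 1)" if "x \<in> P" for x
    using v(3)[OF that] by (simp add: m_def)
  then have "(\<lambda>x. (x, 1)) ` P \<union> {0} \<subseteq> {z. m \<le> (a, t) \<bullet> z}"
    by (auto simp: m_def)
  then have ge: "pyr P \<subseteq> {z. m \<le> (a, t) \<bullet> z}"
    unfolding pyr_def by (intro hull_minimal) (auto simp: convex_halfspace_ge)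
  have apex: "0 \<in> pyr P" and base: "(v, 1) \<in> pyr P"
    unfolding pyr_def using v(1) by (auto intro: hull_inc)
  have attained: "support_min (pyr P) (a, t) = m" if "z \<in> pyr P" "(a, t) \<bullet> z = m" for z
    using support_min_eqI[OF that(1), of "(a, t)"] ge that(2) by auto
  consider "(a, t) \<bullet> 0 = m" | "(a, t) \<bullet> (v, 1) = m"
    unfolding m_def by (cases "0 \<le> a \<bullet> v + t") simp_all
  then have "support_min (pyr P) (a, t) = m"
    using attained apex base by cases
  then show ?thesis using v(2) m_def by simp
qed

lemma fine_adjoint_antimono: "r \<le> s \<Longrightarrow> fine_adjoint Q s \<subseteq> fine_adjoint Q r"
  unfolding fine_adjoint_def by force

definition fine_levels :: "'a::euclidean_space set \<Rightarrow> real set" where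
  "fine_levels P = {s. 0 < s \<and> fine_adjoint P s \<noteq> {}}"

lemma fine_codegree_eq: "fine_codegree P = inverse (Sup (fine_levels P))"
  unfolding fine_codegree_def fine_levels_def ..

lemma fine_levels_nonempty:
  fixes P :: "'a::euclidean_space set"
  assumes "lattice_polytope P" "aff_dim P = int DIM('a)"
  shows "fine_levels P \<noteq> {}"
proof -
  have "convex P" "P \<noteq> {}"
    using assms(1) unfolding lattice_polytope_def by auto
  then have "rel_interior P \<noteq> {}" by (simp add: rel_interior_eq_empty)
  then have "interior P \<noteq> {}" using interior_rel_interior_gen[of P] assms(2) by simp
  then obtain x r where r: "0 < r" "cball x r \<subseteq> P"
    using mem_interior_cball by blast
  have "x \<in> fine_adjoint P r"
    unfolding fine_adjoint_def
  proof (intro CollectI allI impI, elim conjE)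
    fix a :: 'a assume a: "lattice_pt a" "a \<noteq> 0"
    define p where "p = x - (r / norm a) *\<^sub>R a"
    have "p \<in> P" using r a(2) by (intro subsetD[OF r(2)]) (simp add: p_def dist_norm)
    have "a \<bullet> p = a \<bullet> x - r * norm a"
      using a(2) by (simp add: p_def inner_diff_right dot_square_norm power2_eq_square)
    also have "\<dots> \<le> a \<bullet> x - r"
      using norm_ge_1_if_lattice_pt[OF a] r(1) by simp
    finally show "support_min P a + r \<le> a \<bullet> x"
      using support_min_le[OF assms(1) \<open>p \<in> P\<close>, of a] by linarith
  qed
  with r(1) show ?thesis unfolding fine_levels_def by blast
qed

lemma fine_levels_bdd_above:
  fixes P :: "'a::euclidean_space set"
  shows "bdd_above (fine_levels P)"
proof -
  obtain b :: 'a where b: "b \<in> Basis" using nonempty_Basis by blast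
  have "s \<le> - (support_min P b + support_min P (- b)) / 2" if s: "s \<in> fine_levels P" for s
  proof -
    obtain x where "x \<in> fine_adjoint P s" using s unfolding fine_levels_def by blast
    moreover have "lattice_pt b" "lattice_pt (- b)" "b \<noteq> 0"
      using b by (auto simp: lattice_pt_Basis lattice_pt_uminus nonzero_Basis)
    ultimately have "support_min P b + s \<le> b \<bullet> x" "support_min P (- b) + s \<le> - b \<bullet> x"
      unfolding fine_adjoint_def by auto
    then show ?thesis by simp
  qed
  then show ?thesis unfolding bdd_above_def by blast
qed

lemma min_0_le_mult:
  fixes l u :: real
  assumes "0 \<le> l" "l \<le> 1"
  shows "min 0 u \<le> l * u"
proof (cases "0 \<le> u")
  case False
  then have "0 \<le> (1 - l) * - u" using assms(2) by (intro mult_nonneg_nonneg) auto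
  then show ?thesis by (simp add: algebra_simps)
qed (use assms in simp)

lemma fine_adjoint_pyr_lift:
  fixes P :: "'a::euclidean_space set"
  assumes P: "lattice_polytope P" and c: "0 < c" "c \<le> 1" and x: "x \<in> fine_adjoint P c"
  shows "(inverse (1 + c) *\<^sub>R x, inverse (1 + c)) \<in> fine_adjoint (pyr P) (c / (1 + c))"
proof -
  define l where "l = inverse (1 + c)"
  have l: "0 < l" "l \<le> 1" "c / (1 + c) = c * l" "c * l = 1 - l"
    using c by (auto simp: l_def field_simps)
  have "min 0 (support_min P a + t) + c * l \<le> l * (a \<bullet> x + t)"
    if lat: "lattice_pt a" "t \<in> \<int>" "(a, t) \<noteq> 0" for a t
  proof (cases "a = 0")
    case True
    with lat obtain k where "t = of_int k" "k \<noteq> 0" by (auto simp: zero_prod_def elim: Ints_cases)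
    then consider "1 \<le> t" | "t \<le> -1" by linarith
    then show ?thesis
    proof cases
      case 1
      then have "c * l \<le> t * l" using c l(1) by (intro mult_right_mono) auto
      with 1 show ?thesis using True support_min_zero[OF P] by (simp add: mult.commute)
    next
      case 2
      then have "0 \<le> (1 - l) * (- 1 - t)" using l(2) by (intro mult_nonneg_nonneg) auto
      with 2 show ?thesis using True support_min_zero[OF P] l(4) by (simp add: algebra_simps)
    qed
  next
    case False
    with lat x have "support_min P a + c \<le> a \<bullet> x" by (auto simp: fine_adjoint_def)
    then have "l * (support_min P a + c) \<le> l * (a \<bullet> x)" using l(1) by (intro mult_left_mono) auto
    moreover have "min 0 (support_min P a + t) \<le> l * (support_min P a + t)"
      using l(1,2) by (intro min_0_le_mult) auto
    ultimately show ?thesis by (simp add: algebra_simps)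
  qed
  then show ?thesis
    unfolding fine_adjoint_def l_def[symmetric]
    by (auto simp: support_min_pyr[OF P] lattice_pt_Pair_iff l(3) algebra_simps)
qed

lemma fine_adjoint_pyr_slice:
  fixes P :: "'a::euclidean_space set"
  assumes P: "lattice_polytope P" and s: "0 < s" and yl: "(y, l) \<in> fine_adjoint (pyr P) s"
  shows "s \<le> l" "l \<le> 1 - s" "inverse l *\<^sub>R y \<in> fine_adjoint P (s / l)"
proof -
  have adjoint_ineq: "min 0 (support_min P a + t) + s \<le> a \<bullet> y + t * l"
    if "lattice_pt a" "t \<in> \<int>" "a \<noteq> 0 \<or> t \<noteq> 0" for a t
  proof -
    have "lattice_pt (a, t)" "(a, t) \<noteq> 0" using that by (auto simp: lattice_pt_Pair_iff zero_prod_def)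
    with yl have "support_min (pyr P) (a, t) + s \<le> (a, t) \<bullet> (y, l)"
      unfolding fine_adjoint_def by blast
    then show ?thesis by (simp add: support_min_pyr[OF P])
  qed
  show "s \<le> l" using adjoint_ineq[of 0 1] by (simp add: support_min_zero[OF P] lattice_pt_zero)
  show "l \<le> 1 - s" using adjoint_ineq[of 0 "- 1"] by (simp add: support_min_zero[OF P] lattice_pt_zero)
  have "0 < l" using s \<open>s \<le> l\<close> by linarith
  have "support_min P a + s / l \<le> a \<bullet> (inverse l *\<^sub>R y)" if a: "lattice_pt a" "a \<noteq> 0" for a
  proof -
    have "support_min P a * l + s \<le> a \<bullet> y"
      using adjoint_ineq[of a "- support_min P a"] a support_min_Ints[OF P a(1)] by simp
    have "support_min P a + s / l = (support_min P a * l + s) / l"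
      using \<open>0 < l\<close> by (simp add: field_simps)
    also have "\<dots> \<le> (a \<bullet> y) / l"
      using \<open>0 < l\<close> \<open>support_min P a * l + s \<le> a \<bullet> y\<close> by (intro divide_right_mono) auto
    also have "\<dots> = a \<bullet> (inverse l *\<^sub>R y)" by (simp add: divide_inverse_commute)
    finally show ?thesis .
  qed
  then show "inverse l *\<^sub>R y \<in> fine_adjoint P (s / l)" unfolding fine_adjoint_def by blast
qed

text \<open>Clamping to \<open>[0, 1]\<close> makes the map monotone and continuous on all of \<open>\<real>\<close>; only its
  values at positive levels matter.\<close>

definition pyr_level :: "real \<Rightarrow> real" where
  "pyr_level s = (let c = max 0 (min s 1) in c / (1 + c))"

lemma pyr_level_eq: "0 \<le> c \<Longrightarrow> c \<le> 1 \<Longrightarrow> pyr_level c = c / (1 + c)"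
  by (simp add: pyr_level_def)

lemma mono_pyr_level: "mono pyr_level"
proof (rule monoI)
  fix r s :: real assume "r \<le> s"
  moreover have "c / (1 + c) \<le> d / (1 + d)" if "0 \<le> c" "c \<le> d" for c d :: real
    using that by (simp add: divide_simps algebra_simps)
  ultimately show "pyr_level r \<le> pyr_level s" by (simp add: pyr_level_def Let_def)
qed

lemma isCont_pyr_level: "isCont pyr_level x"
proof -
  have "1 + max 0 (min y 1) \<noteq> 0" for y :: real by linarith
  then show ?thesis unfolding pyr_level_def Let_def by (intro continuous_intros) auto
qed

lemma Sup_pyr_level_image:
  assumes "S \<noteq> {}" "bdd_above S"
  shows "Sup (pyr_level ` S) = pyr_level (Sup S)"
  using continuous_at_Sup_mono[OF mono_pyr_level _ assms]
    continuous_at_imp_continuous_at_within[OF isCont_pyr_level] by simp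

lemma inverse_pyr_level:
  assumes "0 < s"
  shows "inverse (pyr_level s) = max 2 (inverse s + 1)"
proof (cases "s \<le> 1")
  case True
  moreover from True assms have "1 \<le> inverse s" by (simp add: one_le_inverse_iff)
  ultimately show ?thesis using assms by (simp add: pyr_level_eq field_simps)
next
  case False
  moreover from False have "inverse s \<le> 1" by (simp add: inverse_le_1_iff)
  ultimately show ?thesis by (simp add: pyr_level_def)
qed

lemma fine_levels_pyr:
  fixes P :: "'a::euclidean_space set"
  assumes P: "lattice_polytope P"
  shows "fine_levels (pyr P) = pyr_level ` fine_levels P"
proof (intro equalityI subsetI)
  fix s assume "s \<in> fine_levels (pyr P)"
  then obtain y l where s: "0 < s" and yl: "(y, l) \<in> fine_adjoint (pyr P) s"
    unfolding fine_levels_def by auto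
  note slice = fine_adjoint_pyr_slice[OF P s yl]
  define u where "u = s / (1 - s)"
  have "0 < l" "s \<le> 1 / 2" using s slice(1,2) by linarith+
  then have u: "0 < u" "u \<le> 1" using s by (auto simp: u_def field_simps)
  have "u \<le> s / l" unfolding u_def using s \<open>0 < l\<close> slice(2) by (intro divide_left_mono) auto
  then have "fine_adjoint P u \<noteq> {}" using slice(3) fine_adjoint_antimono by blast
  then have "u \<in> fine_levels P" using u(1) unfolding fine_levels_def by blast
  moreover have "pyr_level u = s"
    using u \<open>s \<le> 1 / 2\<close> by (simp add: pyr_level_eq u_def field_simps)
  ultimately show "s \<in> pyr_level ` fine_levels P" by force
next
  fix s assume "s \<in> pyr_level ` fine_levels P"
  then obtain u x where u: "0 < u" "x \<in> fine_adjoint P u" "s = pyr_level u"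
    unfolding fine_levels_def by auto
  define c where "c = min u 1"
  have c: "0 < c" "c \<le> 1" "s = c / (1 + c)" using u by (auto simp: c_def pyr_level_def Let_def)
  have "x \<in> fine_adjoint P c" using u(2) fine_adjoint_antimono[of c u] by (auto simp: c_def)
  then have "fine_adjoint (pyr P) s \<noteq> {}" using fine_adjoint_pyr_lift[OF P c(1,2)] c(3) by blast
  then show "s \<in> fine_levels (pyr P)" using c unfolding fine_levels_def by simp
qed

theorem mainTheorem5:
  fixes P :: "'a::euclidean_space set"
  assumes "lattice_polytope P"
    and "aff_dim P = int DIM('a)"
  shows "fine_codegree (pyr P) = max 2 (fine_codegree P + 1)"
proof -
  have ne: "fine_levels P \<noteq> {}" using fine_levels_nonempty[OF assms] .
  have bdd: "bdd_above (fine_levels P)" by (rule fine_levels_bdd_above)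
  have "0 < Sup (fine_levels P)"
    using ne less_cSup_iff[OF ne bdd, of 0] unfolding fine_levels_def by blast
  then show ?thesis
    by (simp add: fine_codegree_eq fine_levels_pyr[OF assms(1)] Sup_pyr_level_image[OF ne bdd]
        inverse_pyr_level)
qed

end
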